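(* Let $X$ be a $G$-space and suppose that for some $k>0$ there is a continuous map $\overline{s_k}\colon P(X/G)\to\mathcal{P}_k(X)$ with $\theta_k\circ\overline{s_k}=\mathrm{id}_{P(X/G)}$. Then $\mathrm{TC}^{G,k+2}(X)\le\mathrm{TC}(X/G)$, and consequently $\mathrm{TC}^{G,\infty}(X)\le\mathrm{TC}(X/G)$.
   Context: All spaces are well-pointed CW complexes, $G$ a topological group acting cellularly. $PX$ is the path space with compact-open topology, $\rho_X\colon X\to X/G$ the orbit map. $\mathcal{P}_k(X)=\{(\gamma_1,\dots,\gamma_k)\in(PX)^k\mid G\gamma_i(1)=G\gamma_{i+1}(0),\ 1\le i\le k-1\}$, and $\pi_k\colon\mathcal{P}_k(X)\to X\times X$, $\pi_k(\gamma_1,\dots,\gamma_k)=(\gamma_1(0),\gamma_k(1))$ (a fibration). The (reduced) sectional category $\mathrm{secat}(f)$ of $f\colon E\to B$ is the least $n\ge0$ such that $B$ has an open cover $U_0,\dots,U_n$ with maps $s_i\colon U_i\to E$ satisfying $f\circ s_i\simeq$ inclusion $U_i\hookrightarrow B$. $\mathrm{TC}(Y)=\mathrm{secat}(PY\to Y\times Y,\ \gamma\mapsto(\gamma(0),\gamma(1)))$ (reduced). $\mathrm{TC}^{G,k}(X)=\mathrm{secat}(\pi_k)$; this is non-increasing in $k$, and $\mathrm{TC}^{G,\infty}(X)=\min_{k\ge1}\mathrm{TC}^{G,k}(X)$. The map $\theta_k\colon\mathcal{P}_k(X)\to P(X/G)$ is $\theta_k(\gamma_1,\dots,\gamma_k)=(\rho_X\circ\gamma_1)*\cdots*(\rho_X\circ\gamma_k)$,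 the concatenation of the projected paths. *)

theory Defs
  imports "HOL-Analysis.Analysis" "HOL-Algebra.Group"
begin

definition top_group :: "'g topology \<Rightarrow> ('g, 'm) monoid_scheme \<Rightarrow> bool" where
  "top_group TG G \<longleftrightarrow> group G \<and> topspace TG = carrier G
     \<and> continuous_map (prod_topology TG TG) TG (\<lambda>(g, h). g \<otimes>\<^bsub>G\<^esub> h)
     \<and> continuous_map TG TG (\<lambda>g. inv\<^bsub>G\<^esub> g)"

definition G_space :: "'g topology \<Rightarrow> ('g, 'm) monoid_scheme \<Rightarrow> ('g \<Rightarrow> 'a \<Rightarrow> 'a) \<Rightarrow> 'a topology \<Rightarrow> bool" where
  "G_space TG G act X \<longleftrightarrow> top_group TG G
     \<and> continuous_map (prod_topology TG X) X (\<lambda>(g, x). act g x)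
     \<and> (\<forall>x\<in>topspace X. act \<one>\<^bsub>G\<^esub> x = x)
     \<and> (\<forall>g\<in>carrier G. \<forall>h\<in>carrier G. \<forall>x\<in>topspace X.
          act (g \<otimes>\<^bsub>G\<^esub> h) x = act g (act h x))"

definition orbit :: "('g, 'm) monoid_scheme \<Rightarrow> ('g \<Rightarrow> 'a \<Rightarrow> 'a) \<Rightarrow> 'a \<Rightarrow> 'a set" where
  "orbit G act x = {act g x | g. g \<in> carrier G}"

definition orbit_space :: "('g, 'm) monoid_scheme \<Rightarrow> ('g \<Rightarrow> 'a \<Rightarrow> 'a) \<Rightarrow> 'a topology \<Rightarrow> 'a set topology" where
  "orbit_space G act X = topology (\<lambda>U. U \<subseteq> orbit G act ` topspace X
      \<and> openin X {x \<in> topspace X. orbit G act x \<in> U})"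

text \<open>Paths are represented by functions on the reals, canonically \<open>undefined\<close> outside [0,1].\<close>
definition paths :: "'a topology \<Rightarrow> (real \<Rightarrow> 'a) set" where
  "paths X = {g. pathin X g \<and> (\<forall>t. t \<notin> {0..1} \<longrightarrow> g t = undefined)}"

definition path_space :: "'a topology \<Rightarrow> (real \<Rightarrow> 'a) topology" where
  "path_space X = topology_generated_by
     {{g \<in> paths X. g ` K \<subseteq> U} | K U. compact K \<and> K \<subseteq> {0..1} \<and> openin X U}"

text \<open>Tuples (gamma_1,...,gamma_k) are functions on {0..<k} (index i stands for gamma_(i+1)).\<close>
definition Pk :: "('g, 'm) monoid_scheme \<Rightarrow> ('g \<Rightarrow> 'a \<Rightarrow> 'a) \<Rightarrow> 'a topology \<Rightarrow> nat
                   \<Rightarrow> (nat \<Rightarrow> real \<Rightarrow> 'a) topology" where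
  "Pk G act X k = subtopology (product_topology (\<lambda>_. path_space X) {..<k})
     {\<gamma>. \<forall>i. Suc i < k \<longrightarrow> orbit G act (\<gamma> i 1) = orbit G act (\<gamma> (Suc i) 0)}"

definition pi_k :: "nat \<Rightarrow> (nat \<Rightarrow> real \<Rightarrow> 'a) \<Rightarrow> 'a \<times> 'a" where
  "pi_k k \<gamma> = (\<gamma> 0 0, \<gamma> (k - 1) 1)"

text \<open>Concatenation of k paths, the i-th one traversed on [i/k, (i+1)/k].\<close>
definition concat_paths :: "nat \<Rightarrow> (nat \<Rightarrow> real \<Rightarrow> 'b) \<Rightarrow> real \<Rightarrow> 'b" where
  "concat_paths k p t = (if t \<in> {0..1}
      then (let i = min (k - 1) (nat \<lfloor>real k * t\<rfloor>) in p i (real k * t - real i))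
      else undefined)"

definition theta_k :: "('g, 'm) monoid_scheme \<Rightarrow> ('g \<Rightarrow> 'a \<Rightarrow> 'a) \<Rightarrow> nat
                        \<Rightarrow> (nat \<Rightarrow> real \<Rightarrow> 'a) \<Rightarrow> real \<Rightarrow> 'a set" where
  "theta_k G act k \<gamma> = concat_paths k (\<lambda>i. orbit G act \<circ> \<gamma> i)"

text \<open>Reduced sectional category of f : E \<rightarrow> B, infinity if no finite cover exists.\<close>
definition secat :: "'e topology \<Rightarrow> 'b topology \<Rightarrow> ('e \<Rightarrow> 'b) \<Rightarrow> enat" where
  "secat E B f = (INF n \<in> {n. \<exists>U s. (\<forall>i\<le>n. openin B (U i)) \<and> (\<Union>i\<le>n. U i) = topspace B
      \<and> (\<forall>i\<le>n. continuous_map (subtopology B (U i)) E (s i)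
           \<and> homotopic_with (\<lambda>_. True) (subtopology B (U i)) B (f \<circ> s i) id)}. enat n)"

definition TC :: "'a topology \<Rightarrow> enat" where
  "TC Y = secat (path_space Y) (prod_topology Y Y) (\<lambda>\<gamma>. (\<gamma> 0, \<gamma> 1))"

definition TCG :: "('g, 'm) monoid_scheme \<Rightarrow> ('g \<Rightarrow> 'a \<Rightarrow> 'a) \<Rightarrow> 'a topology \<Rightarrow> nat \<Rightarrow> enat" where
  "TCG G act X k = secat (Pk G act X k) (prod_topology X X) (pi_k k)"

definition TCG_inf :: "('g, 'm) monoid_scheme \<Rightarrow> ('g \<Rightarrow> 'a \<Rightarrow> 'a) \<Rightarrow> 'a topology \<Rightarrow> enat" where
  "TCG_inf G act X = (INF k \<in> {1..}. TCG G act X k)"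

end

theory Submission
  imports Defs
begin

text \<open>
  A section of the path fibration of \<open>X/G\<close> over \<open>U\<close> that is correct only up to a homotopy of
  its endpoint map to the inclusion \<open>U \<subseteq> X/G \<times> X/G\<close> becomes strict once the two endpoint
  tracks of the homotopy are spliced onto each path. Over the preimage of \<open>U\<close> in \<open>X \<times> X\<close> this
  gives, continuously in \<open>(x, y)\<close>, a path in \<open>X/G\<close> from the orbit of \<open>x\<close> to the orbit of \<open>y\<close>.
  The section \<open>s\<close> lifts it to a \<open>k\<close>-tuple of paths in \<open>X\<close> whose outer endpoints lie in the
  orbits of \<open>x\<close> and \<open>y\<close>, and flanking it with the constant paths at \<open>x\<close> and at \<open>y\<close> yields a
  \<open>(k + 2)\<close>-tuple that \<open>pi_k (k + 2)\<close> maps exactly to \<open>(x, y)\<close>. Thus every motion-planning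
  cover of \<open>X/G \<times> X/G\<close> pulls back to a cover of \<open>X \<times> X\<close> by local sections of \<open>pi_k (k + 2)\<close>.
\<close>

lemma topspace_path_space [simp]: "topspace (path_space Y) = paths Y"
proof -
  have "paths Y \<in> {{g \<in> paths Y. g ` K \<subseteq> U} | K U. compact K \<and> K \<subseteq> {0..1} \<and> openin Y U}"
    by (rule CollectI, rule exI[of _ "{}"], rule exI[of _ "{}"]) auto
  then show ?thesis
    unfolding path_space_def topology_generated_by_topspace by blast
qed

lemma paths_in_topspace: "g \<in> paths Y \<Longrightarrow> t \<in> {0..1} \<Longrightarrow> g t \<in> topspace Y"
  unfolding paths_def pathin_def using continuous_map_image_subset_topspace by fastforce

lemma openin_compact_slice_set:
  assumes "openin (prod_topology Z T) W" and "compactin T K"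
  shows "openin Z {z \<in> topspace Z. {z} \<times> K \<subseteq> W}"
proof (subst openin_subopen, intro ballI)
  fix z assume "z \<in> {z \<in> topspace Z. {z} \<times> K \<subseteq> W}"
  then have "z \<in> topspace Z" "{z} \<times> K \<subseteq> W"
    by auto
  from tube_lemma_right[OF assms this] obtain A B
    where A: "openin Z A" "z \<in> A" and AB: "K \<subseteq> B" "A \<times> B \<subseteq> W"
    by auto
  have "A \<subseteq> {z \<in> topspace Z. {z} \<times> K \<subseteq> W}"
    using openin_subset[OF A(1)] AB by fast
  with A show "\<exists>A. openin Z A \<and> z \<in> A \<and> A \<subseteq> {z \<in> topspace Z. {z} \<times> K \<subseteq> W}"
    by blast
qed

lemma continuous_map_into_path_space:
  assumes F: "continuous_map (prod_topology Z (top_of_set {0..1})) Y F"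
  shows "continuous_map Z (path_space Y) (\<lambda>z t. if t \<in> {0..1} then F (z, t) else undefined)"
    (is "continuous_map Z _ ?f")
proof -
  have paths: "?f z \<in> paths Y" if z: "z \<in> topspace Z" for z
  proof -
    have "continuous_map (top_of_set {0..1}) Y (F \<circ> Pair z)"
      by (rule continuous_map_compose[OF _ F])
        (auto intro!: continuous_map_pairwise[THEN iffD2] simp: z o_def)
    then have "pathin Y (?f z)"
      unfolding pathin_def by (rule continuous_map_eq) auto
    then show ?thesis
      unfolding paths_def by auto
  qed
  show ?thesis
    unfolding path_space_def
  proof (rule continuous_on_generated_topo)
    fix W assume "W \<in> {{g \<in> paths Y. g ` K \<subseteq> U} | K U. compact K \<and> K \<subseteq> {0..1} \<and> openin Y U}"
    then obtain K U where W: "W = {g \<in> paths Y. g ` K \<subseteq> U}"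
      and K: "compact K" "K \<subseteq> {0..1}" and U: "openin Y U" by blast
    let ?FU = "{p \<in> topspace (prod_topology Z (top_of_set {0..1})). F p \<in> U}"
    have "openin Z {z \<in> topspace Z. {z} \<times> K \<subseteq> ?FU}"
    proof (rule openin_compact_slice_set)
      show "openin (prod_topology Z (top_of_set {0..1})) ?FU"
        using F U by (rule openin_continuous_map_preimage)
      show "compactin (top_of_set {0..1}) K"
        using K by (simp add: compactin_subtopology)
    qed
    moreover have "?f -` W \<inter> topspace Z = {z \<in> topspace Z. {z} \<times> K \<subseteq> ?FU}"
      using K(2) paths unfolding W by (auto simp: subset_iff)
    ultimately show "openin Z (?f -` W \<inter> topspace Z)"
      by simp
  next
    show "?f ` topspace Z \<subseteq> \<Union> {{g \<in> paths Y. g ` K \<subseteq> U} | K U. compact K \<and> K \<subseteq> {0..1} \<and> openin Y U}"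
      using paths topspace_path_space[of Y]
      unfolding path_space_def topology_generated_by_topspace by blast
  qed
qed

lemma continuous_map_path_eval:
  "continuous_map (prod_topology (path_space Y) (top_of_set {0..1})) Y (\<lambda>(g, t). g t)"
  unfolding continuous_map_def
proof (intro conjI allI impI)
  let ?P = "prod_topology (path_space Y) (top_of_set {0..1::real})"
  show "(\<lambda>(g, t). g t) \<in> topspace ?P \<rightarrow> topspace Y"
    by (auto intro: paths_in_topspace)
  fix V assume V: "openin Y V"
  show "openin ?P {x \<in> topspace ?P. (\<lambda>(g, t). g t) x \<in> V}"
  proof (subst openin_subopen, intro ballI)
    fix x assume "x \<in> {x \<in> topspace ?P. (\<lambda>(g, t). g t) x \<in> V}"
    then obtain g t where x: "x = (g, t)" and g: "g \<in> paths Y" and t: "t \<in> {0..1}"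
      and gt: "g t \<in> V" by auto
    have "openin (top_of_set {0..1}) {u \<in> topspace (top_of_set {0..1::real}). g u \<in> V}"
      using g V unfolding paths_def pathin_def by (blast intro: openin_continuous_map_preimage)
    then obtain e where "e > 0" and e: "\<And>u. u \<in> {0..1} \<Longrightarrow> dist u t < e \<Longrightarrow> g u \<in> V"
      using t gt unfolding openin_euclidean_subtopology_iff by auto
    define K where "K = cball t (e/2) \<inter> {0..1}"
    define N where "N = {h \<in> paths Y. h ` K \<subseteq> V} \<times> (ball t (e/2) \<inter> {0..1})"
    have "openin (path_space Y) {h \<in> paths Y. h ` K \<subseteq> V}"
      unfolding path_space_def
      by (rule topology_generated_by_Basis) (use V in \<open>auto simp: K_def compact_Int_closed\<close>)
    moreover have "openin (top_of_set {0..1}) (ball t (e/2) \<inter> {0..1})"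
      using openin_open_Int[of "ball t (e/2)" "{0..1::real}"] by (simp add: Int_commute)
    ultimately have "openin ?P N"
      by (simp add: N_def openin_prod_Times_iff)
    moreover have "x \<in> N"
      using g t e \<open>e > 0\<close> by (auto simp: N_def K_def x dist_commute)
    moreover have "N \<subseteq> {x \<in> topspace ?P. (\<lambda>(g, t). g t) x \<in> V}"
      by (auto simp: N_def K_def)
    ultimately show "\<exists>T. openin ?P T \<and> x \<in> T \<and> T \<subseteq> {x \<in> topspace ?P. (\<lambda>(g, t). g t) x \<in> V}"
      by blast
  qed
qed

lemma openin_orbit_space:
  "openin (orbit_space G act X) U \<longleftrightarrow>
     U \<subseteq> orbit G act ` topspace X \<and> openin X {x \<in> topspace X. orbit G act x \<in> U}"
proof -
  let ?pre = "\<lambda>U. {x \<in> topspace X. orbit G act x \<in> U}"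
  have pre_Int: "?pre (S \<inter> T) = ?pre S \<inter> ?pre T" for S T
    by blast
  have pre_Union: "?pre (\<Union>\<K>) = (\<Union>K\<in>\<K>. ?pre K)" for \<K>
    by blast
  have "istopology (\<lambda>U. U \<subseteq> orbit G act ` topspace X \<and> openin X (?pre U))"
    unfolding istopology_def pre_Int pre_Union by (auto intro!: openin_Int openin_Union)
  then show ?thesis
    unfolding orbit_space_def by (simp add: topology_inverse')
qed

lemma topspace_orbit_space: "topspace (orbit_space G act X) = orbit G act ` topspace X"
proof
  show "topspace (orbit_space G act X) \<subseteq> orbit G act ` topspace X"
    unfolding topspace_def openin_orbit_space by blast
  have "{x \<in> topspace X. orbit G act x \<in> orbit G act ` topspace X} = topspace X"
    by blast
  then have "openin (orbit_space G act X) (orbit G act ` topspace X)"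
    by (simp add: openin_orbit_space)
  then show "orbit G act ` topspace X \<subseteq> topspace (orbit_space G act X)"
    by (rule openin_subset)
qed

lemma continuous_map_orbit: "continuous_map X (orbit_space G act X) (orbit G act)"
  unfolding continuous_map_def topspace_orbit_space openin_orbit_space by blast

lemma theta_k_0: "theta_k G act k \<gamma> 0 = orbit G act (\<gamma> 0 0)"
  by (simp add: theta_k_def concat_paths_def)

lemma theta_k_1: "k > 0 \<Longrightarrow> theta_k G act k \<gamma> 1 = orbit G act (\<gamma> (k - 1) 1)"
  by (simp add: theta_k_def concat_paths_def of_nat_diff)

lemma continuous_map_Pk:
  "continuous_map Z (Pk G act X k) w \<longleftrightarrow>
     w ` topspace Z \<subseteq> extensional {..<k}
     \<and> (\<forall>j<k. continuous_map Z (path_space X) (\<lambda>z. w z j))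
     \<and> (\<forall>z\<in>topspace Z. \<forall>i. Suc i < k \<longrightarrow> orbit G act (w z i 1) = orbit G act (w z (Suc i) 0))"
  unfolding Pk_def continuous_map_in_subtopology continuous_map_componentwise Pi_iff mem_Collect_eq
  by blast

definition const_path :: "'a \<Rightarrow> real \<Rightarrow> 'a" where
  "const_path x = (\<lambda>t. if t \<in> {0..1} then x else undefined)"

lemma const_path_0 [simp]: "const_path x 0 = x" and const_path_1 [simp]: "const_path x 1 = x"
  by (simp_all add: const_path_def)

lemma continuous_map_const_path:
  assumes "continuous_map Z X f"
  shows "continuous_map Z (path_space X) (\<lambda>z. const_path (f z))"
  unfolding const_path_def
  using continuous_map_into_path_space[OF continuous_map_compose[OF continuous_map_fst assms]]
  by (simp only: comp_apply fst_conv)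

definition clamp01 :: "real \<Rightarrow> real" where
  "clamp01 t = max 0 (min 1 t)"

lemma continuous_map_clamp01:
  "continuous_map Z euclideanreal f \<Longrightarrow> continuous_map Z (top_of_set {0..1}) (\<lambda>z. clamp01 (f z))"
  unfolding clamp01_def
  by (auto simp: continuous_map_in_subtopology intro!: continuous_map_real_max continuous_map_real_min)

lemma continuous_map_cases_le3:
  assumes p: "continuous_map X euclideanreal p" and "a \<le> b"
    and f: "continuous_map X Y f" and g: "continuous_map X Y g" and h: "continuous_map X Y h"
    and fg: "\<And>x. p x = a \<Longrightarrow> f x = g x" and gh: "\<And>x. p x = b \<Longrightarrow> g x = h x"
  shows "continuous_map X Y (\<lambda>x. if p x \<le> a then f x else if p x \<le> b then g x else h x)"
proof -
  have gh': "continuous_map X Y (\<lambda>x. if p x \<le> b then g x else h x)"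
    by (rule continuous_map_cases_le) (use p g h gh in \<open>auto intro: continuous_map_from_subtopology\<close>)
  show ?thesis
    by (rule continuous_map_cases_le[where q = "\<lambda>_. a"])
      (use p f gh' fg \<open>a \<le> b\<close> in \<open>auto intro: continuous_map_from_subtopology\<close>)
qed

lemma homotopic_path_section_imp_path_section:
  fixes \<sigma> :: "'a \<times> 'a \<Rightarrow> real \<Rightarrow> 'a"
  assumes \<sigma>: "continuous_map (subtopology (prod_topology Y Y) U) (path_space Y) \<sigma>"
    and hom: "homotopic_with (\<lambda>_. True) (subtopology (prod_topology Y Y) U) (prod_topology Y Y)
                ((\<lambda>\<gamma>. (\<gamma> 0, \<gamma> 1)) \<circ> \<sigma>) id"
  obtains \<beta> where "continuous_map (subtopology (prod_topology Y Y) U) (path_space Y) \<beta>"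
    and "\<And>u. \<beta> u 0 = fst u" and "\<And>u. \<beta> u 1 = snd u"
proof -
  let ?YU = "subtopology (prod_topology Y Y) U" and ?I = "top_of_set {0..1::real}"
  obtain H where H: "continuous_map (prod_topology ?I ?YU) (prod_topology Y Y) H"
    and H0: "\<And>u. H (0, u) = (\<sigma> u 0, \<sigma> u 1)" and H1: "\<And>u. H (1, u) = u"
    using hom unfolding homotopic_with_def by auto
  have t: "continuous_map (prod_topology ?YU ?I) euclideanreal snd"
    by (rule continuous_map_into_fulltopology[OF continuous_map_snd])
  have reparam: "continuous_map (prod_topology ?YU ?I) ?I (\<lambda>x. clamp01 (c * snd x + d))" for c d
    using t by (intro continuous_map_clamp01 continuous_intros)
  have track: "continuous_map (prod_topology ?YU ?I) Y (\<lambda>x. fst (H (clamp01 (c * snd x + d), fst x)))"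
    "continuous_map (prod_topology ?YU ?I) Y (\<lambda>x. snd (H (clamp01 (c * snd x + d), fst x)))" for c d
    using continuous_map_compose[OF continuous_map_pairedI[OF reparam continuous_map_fst] H]
    by (simp_all add: continuous_map_pairwise o_def)
  have along: "continuous_map (prod_topology ?YU ?I) Y (\<lambda>x. \<sigma> (fst x) (clamp01 (c * snd x + d)))" for c d
    using continuous_map_compose[OF continuous_map_pairedI
        [OF continuous_map_compose[OF continuous_map_fst \<sigma>] reparam] continuous_map_path_eval]
    by (simp add: o_def)
  \<comment> \<open>Run back along the first endpoint track of the homotopy, then along \<open>\<sigma>\<close>, then forward
    along the second track.\<close>
  define B where "B x = (if snd x \<le> 1/3 then fst (H (clamp01 (-3 * snd x + 1), fst x))
      else if snd x \<le> 2/3 then \<sigma> (fst x) (clamp01 (3 * snd x + -1))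
      else snd (H (clamp01 (3 * snd x + -2), fst x)))" for x
  have "continuous_map (prod_topology ?YU ?I) Y B"
    unfolding B_def by (rule continuous_map_cases_le3[OF t _ track(1) along track(2)])
      (auto simp: clamp01_def H0)
  from continuous_map_into_path_space[OF this] show ?thesis
    by (rule that) (simp_all add: B_def clamp01_def H1)
qed

lemma Pk_extend_by_constant_paths:
  assumes "k > 0"
    and l: "continuous_map (subtopology (prod_topology X X) V) (Pk G act X k) l"
    and l0: "\<And>p. p \<in> V \<Longrightarrow> orbit G act (l p 0 0) = orbit G act (fst p)"
    and l1: "\<And>p. p \<in> V \<Longrightarrow> orbit G act (l p (k - 1) 1) = orbit G act (snd p)"
  obtains w where "continuous_map (subtopology (prod_topology X X) V) (Pk G act X (k + 2)) w"
    and "\<And>p. pi_k (k + 2) (w p) = p"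
proof -
  let ?Z = "subtopology (prod_topology X X) V"
  define w where "w p j = (if j = 0 then const_path (fst p) else if j \<le> k then l p (j - 1)
      else if j = k + 1 then const_path (snd p) else undefined)" for p j
  from l have lifts: "\<And>j. j < k \<Longrightarrow> continuous_map ?Z (path_space X) (\<lambda>p. l p j)"
    and chain: "\<And>p i. p \<in> topspace ?Z \<Longrightarrow> Suc i < k \<Longrightarrow>
                  orbit G act (l p i 1) = orbit G act (l p (Suc i) 0)"
    unfolding continuous_map_Pk by auto
  have "continuous_map ?Z (Pk G act X (k + 2)) w"
    unfolding continuous_map_Pk
  proof (intro conjI ballI allI impI)
    show "w ` topspace ?Z \<subseteq> extensional {..<k + 2}"
      by (auto simp: w_def extensional_def)
  next
    fix j assume "j < k + 2"
    then consider "j = 0" | "0 < j" "j \<le> k" | "j = k + 1"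
      by linarith
    then show "continuous_map ?Z (path_space X) (\<lambda>p. w p j)"
    proof cases
      case 1
      then show ?thesis
        using continuous_map_const_path[OF continuous_map_from_subtopology[OF continuous_map_fst]]
        by (simp add: w_def)
    next
      case 2
      then show ?thesis
        using lifts[of "j - 1"] \<open>k > 0\<close> by (simp add: w_def)
    next
      case 3
      then show ?thesis
        using continuous_map_const_path[OF continuous_map_from_subtopology[OF continuous_map_snd]]
        by (simp add: w_def)
    qed
  next
    fix p i assume p: "p \<in> topspace ?Z" and "Suc i < k + 2"
    then consider "i = 0" | "0 < i" "i < k" | "i = k"
      by linarith
    then show "orbit G act (w p i 1) = orbit G act (w p (Suc i) 0)"
    proof cases
      case 1
      then show ?thesis
        using l0 p \<open>k > 0\<close> by (simp add: w_def)
    next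
      case 2
      then show ?thesis
        using chain[OF p, of "i - 1"] by (simp add: w_def)
    next
      case 3
      then show ?thesis
        using l1 p \<open>k > 0\<close> by (simp add: w_def)
    qed
  qed
  moreover have "pi_k (k + 2) (w p) = p" for p
    by (simp add: pi_k_def w_def)
  ultimately show ?thesis
    by (rule that)
qed

lemma continuous_map_orbit_pair:
  "continuous_map (prod_topology X X) (prod_topology (orbit_space G act X) (orbit_space G act X))
     (\<lambda>p. (orbit G act (fst p), orbit G act (snd p)))"
  using continuous_map_compose[OF continuous_map_fst[of X X] continuous_map_orbit[of X G act]]
    continuous_map_compose[OF continuous_map_snd[of X X] continuous_map_orbit[of X G act]]
  by (simp add: continuous_map_pairwise o_def)

lemma Pk_section_over_orbit_preimage:
  fixes G :: "('g, 'm) monoid_scheme" and act :: "'g \<Rightarrow> 'a \<Rightarrow> 'a" and X :: "'a topology"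
    and U :: "('a set \<times> 'a set) set" and s :: "(real \<Rightarrow> 'a set) \<Rightarrow> (nat \<Rightarrow> real \<Rightarrow> 'a)"
  defines "Y \<equiv> orbit_space G act X"
    and "V \<equiv> {p \<in> topspace (prod_topology X X). (orbit G act (fst p), orbit G act (snd p)) \<in> U}"
  assumes "k > 0"
    and s: "continuous_map (path_space Y) (Pk G act X k) s"
    and theta_s: "\<And>\<gamma>. \<gamma> \<in> topspace (path_space Y) \<Longrightarrow> theta_k G act k (s \<gamma>) = \<gamma>"
    and \<sigma>: "continuous_map (subtopology (prod_topology Y Y) U) (path_space Y) \<sigma>"
    and hom: "homotopic_with (\<lambda>_. True) (subtopology (prod_topology Y Y) U) (prod_topology Y Y)
                ((\<lambda>\<gamma>. (\<gamma> 0, \<gamma> 1)) \<circ> \<sigma>) id"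
  shows "\<exists>w. continuous_map (subtopology (prod_topology X X) V) (Pk G act X (k + 2)) w
           \<and> homotopic_with (\<lambda>_. True) (subtopology (prod_topology X X) V) (prod_topology X X)
               (pi_k (k + 2) \<circ> w) id"
proof -
  obtain \<beta> where \<beta>: "continuous_map (subtopology (prod_topology Y Y) U) (path_space Y) \<beta>"
    and \<beta>0: "\<And>u. \<beta> u 0 = fst u" and \<beta>1: "\<And>u. \<beta> u 1 = snd u"
    using homotopic_path_section_imp_path_section[OF \<sigma> hom] by blast
  let ?\<rho>\<rho> = "\<lambda>p. (orbit G act (fst p), orbit G act (snd p))"
  have "continuous_map (subtopology (prod_topology X X) V) (subtopology (prod_topology Y Y) U) ?\<rho>\<rho>"
    using continuous_map_orbit_pair[of X G act]
    by (auto simp: Y_def V_def continuous_map_in_subtopology intro: continuous_map_from_subtopology)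
  then have \<beta>\<rho>: "continuous_map (subtopology (prod_topology X X) V) (path_space Y) (\<beta> \<circ> ?\<rho>\<rho>)"
    using \<beta> by (rule continuous_map_compose)
  have theta_s\<beta>: "theta_k G act k (s (\<beta> (?\<rho>\<rho> p))) = \<beta> (?\<rho>\<rho> p)" if "p \<in> V" for p
  proof (rule theta_s)
    show "\<beta> (?\<rho>\<rho> p) \<in> topspace (path_space Y)"
      using continuous_map_image_subset_topspace[OF \<beta>\<rho>] that by (auto simp: V_def)
  qed
  obtain w where w: "continuous_map (subtopology (prod_topology X X) V) (Pk G act X (k + 2)) w"
    and pi_w: "\<And>p. pi_k (k + 2) (w p) = p"
  proof (rule Pk_extend_by_constant_paths[OF \<open>k > 0\<close>])
    show "continuous_map (subtopology (prod_topology X X) V) (Pk G act X k) (s \<circ> \<beta> \<circ> ?\<rho>\<rho>)"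
      using continuous_map_compose[OF \<beta>\<rho> s] by (simp add: o_assoc)
    show "orbit G act ((s \<circ> \<beta> \<circ> ?\<rho>\<rho>) p 0 0) = orbit G act (fst p)"
      "orbit G act ((s \<circ> \<beta> \<circ> ?\<rho>\<rho>) p (k - 1) 1) = orbit G act (snd p)" if "p \<in> V" for p
      using theta_k_0[of G act k] theta_k_1[OF \<open>k > 0\<close>, of G act] theta_s\<beta>[OF that]
      by (metis \<beta>0 comp_apply fst_conv, metis \<beta>1 comp_apply snd_conv)
  qed (rule that)
  have "homotopic_with (\<lambda>_. True) (subtopology (prod_topology X X) V) (prod_topology X X)
          (pi_k (k + 2) \<circ> w) id"
  proof -
    have "pi_k (k + 2) \<circ> w = id"
      by (rule ext) (simp only: comp_apply pi_w id_apply)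
    then show ?thesis
      by (simp add: homotopic_with_refl continuous_map_id_subt)
  qed
  with w show ?thesis
    by blast
qed

lemma secat_le_pullback:
  assumes R: "continuous_map B B' R"
    and local_sections: "\<And>U \<sigma>. openin B' U \<Longrightarrow> continuous_map (subtopology B' U) E' \<sigma> \<Longrightarrow>
          homotopic_with (\<lambda>_. True) (subtopology B' U) B' (f' \<circ> \<sigma>) id \<Longrightarrow>
          \<exists>w. continuous_map (subtopology B {b \<in> topspace B. R b \<in> U}) E w
            \<and> homotopic_with (\<lambda>_. True) (subtopology B {b \<in> topspace B. R b \<in> U}) B (f \<circ> w) id"
  shows "secat E B f \<le> secat E' B' f'"
  unfolding secat_def
proof (rule INF_superset_mono[OF subsetI])
  fix n assume "n \<in> {n. \<exists>U \<sigma>. (\<forall>i\<le>n. openin B' (U i)) \<and> (\<Union>i\<le>n. U i) = topspace B'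
      \<and> (\<forall>i\<le>n. continuous_map (subtopology B' (U i)) E' (\<sigma> i)
           \<and> homotopic_with (\<lambda>_. True) (subtopology B' (U i)) B' (f' \<circ> \<sigma> i) id)}"
  then obtain U \<sigma> where U: "\<forall>i\<le>n. openin B' (U i)" and cover: "(\<Union>i\<le>n. U i) = topspace B'"
    and \<sigma>: "\<forall>i\<le>n. continuous_map (subtopology B' (U i)) E' (\<sigma> i)
           \<and> homotopic_with (\<lambda>_. True) (subtopology B' (U i)) B' (f' \<circ> \<sigma> i) id"
    unfolding mem_Collect_eq by iprover
  define V where "V i = {b \<in> topspace B. R b \<in> U i}" for i
  have "\<exists>w. continuous_map (subtopology B (V i)) E w
          \<and> homotopic_with (\<lambda>_. True) (subtopology B (V i)) B (f \<circ> w) id" if "i \<in> {..n}" for i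
    unfolding V_def using U \<sigma> that by (intro local_sections) auto
  then obtain w where w: "\<forall>i\<in>{..n}. continuous_map (subtopology B (V i)) E (w i)
          \<and> homotopic_with (\<lambda>_. True) (subtopology B (V i)) B (f \<circ> w i) id"
    by (metis bchoice)
  have "(\<Union>i\<le>n. V i) = topspace B"
  proof
    show "topspace B \<subseteq> (\<Union>i\<le>n. V i)"
    proof
      fix b assume b: "b \<in> topspace B"
      then have "R b \<in> (\<Union>i\<le>n. U i)"
        unfolding cover using continuous_map_image_subset_topspace[OF R] by blast
      with b show "b \<in> (\<Union>i\<le>n. V i)"
        by (auto simp: V_def)
    qed
  qed (auto simp: V_def)
  moreover have "openin B (V i)" if "i \<le> n" for i
    unfolding V_def using R U that by (simp add: openin_continuous_map_preimage)
  ultimately show "n \<in> {n. \<exists>V w. (\<forall>i\<le>n. openin B (V i)) \<and> (\<Union>i\<le>n. V i) = topspace B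
      \<and> (\<forall>i\<le>n. continuous_map (subtopology B (V i)) E (w i)
           \<and> homotopic_with (\<lambda>_. True) (subtopology B (V i)) B (f \<circ> w i) id)}"
    using w by blast
qed simp

theorem mainTheorem3:
  fixes TG :: "'g topology" and G :: "('g, 'm) monoid_scheme"
    and act :: "'g \<Rightarrow> 'a \<Rightarrow> 'a" and X :: "'a topology" and k :: nat
    and s :: "(real \<Rightarrow> 'a set) \<Rightarrow> (nat \<Rightarrow> real \<Rightarrow> 'a)"
  assumes "G_space TG G act X"
    and "k > 0"
    and "continuous_map (path_space (orbit_space G act X)) (Pk G act X k) s"
    and "\<And>\<gamma>. \<gamma> \<in> topspace (path_space (orbit_space G act X))
               \<Longrightarrow> theta_k G act k (s \<gamma>) = \<gamma>"
  shows "TCG G act X (k + 2) \<le> TC (orbit_space G act X)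
       \<and> TCG_inf G act X \<le> TC (orbit_space G act X)"
proof -
  have "TCG G act X (k + 2) \<le> TC (orbit_space G act X)"
    unfolding TCG_def TC_def
    by (rule secat_le_pullback[OF continuous_map_orbit_pair Pk_section_over_orbit_preimage[OF assms(2-4)]])
  moreover have "TCG_inf G act X \<le> TCG G act X (k + 2)"
    unfolding TCG_inf_def by (rule INF_lower) simp
  ultimately show ?thesis
    by (meson order_trans)
qed

end
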